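(* Let $G$ be a torsion-free hyperbolic group. Then every retract of $G$ is malnormal in $G$.
   Context: A subgroup $H\le G$ is a retract of $G$ if there is a homomorphism $\phi:G\to H$ with $\phi(h)=h$ for all $h\in H$. A subgroup $H\le G$ is malnormal if $H\cap gHg^{-1}=\{e\}$ for all $g\in G\setminus H$. *)

theory Defs
  imports "HOL-Algebra.Algebra" "HOL-Analysis.Analysis"
begin

definition word_length :: "('a, 'b) monoid_scheme \<Rightarrow> 'a set \<Rightarrow> 'a \<Rightarrow> nat" where
  "word_length G S g =
     (LEAST n. \<exists>ws. set ws \<subseteq> S \<union> (m_inv G ` S) \<and> length ws = n \<and>
                    foldr (\<lambda>a b. a \<otimes>\<^bsub>G\<^esub> b) ws \<one>\<^bsub>G\<^esub> = g)"

definition word_dist :: "('a, 'b) monoid_scheme \<Rightarrow> 'a set \<Rightarrow> 'a \<Rightarrow> 'a \<Rightarrow> real" where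
  "word_dist G S x y = real (word_length G S (inv\<^bsub>G\<^esub> x \<otimes>\<^bsub>G\<^esub> y))"

definition gromov_product :: "('a, 'b) monoid_scheme \<Rightarrow> 'a set \<Rightarrow> 'a \<Rightarrow> 'a \<Rightarrow> 'a \<Rightarrow> real" where
  "gromov_product G S w x y =
     (word_dist G S w x + word_dist G S w y - word_dist G S x y) / 2"

definition hyperbolic_group :: "('a, 'b) monoid_scheme \<Rightarrow> bool" where
  "hyperbolic_group G \<longleftrightarrow> group G \<and>
     (\<exists>S. finite S \<and> S \<subseteq> carrier G \<and> generate G S = carrier G \<and>
       (\<exists>\<delta>::real. \<forall>w\<in>carrier G. \<forall>x\<in>carrier G. \<forall>y\<in>carrier G. \<forall>z\<in>carrier G.
          gromov_product G S w x z \<ge> min (gromov_product G S w x y) (gromov_product G S w y z) - \<delta>))"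

definition torsion_free :: "('a, 'b) monoid_scheme \<Rightarrow> bool" where
  "torsion_free G \<longleftrightarrow> (\<forall>x\<in>carrier G. \<forall>n::nat. n > 0 \<and> x [^]\<^bsub>G\<^esub> n = \<one>\<^bsub>G\<^esub> \<longrightarrow> x = \<one>\<^bsub>G\<^esub>)"

definition retract :: "'a set \<Rightarrow> ('a, 'b) monoid_scheme \<Rightarrow> bool" where
  "retract H G \<longleftrightarrow> subgroup H G \<and>
     (\<exists>\<phi>. \<phi> \<in> hom G (G\<lparr>carrier := H\<rparr>) \<and> (\<forall>h\<in>H. \<phi> h = h))"

definition malnormal :: "'a set \<Rightarrow> ('a, 'b) monoid_scheme \<Rightarrow> bool" where
  "malnormal H G \<longleftrightarrow> subgroup H G \<and>
     (\<forall>g\<in>carrier G - H. H \<inter> {g \<otimes>\<^bsub>G\<^esub> h \<otimes>\<^bsub>G\<^esub> inv\<^bsub>G\<^esub> g | h. h \<in> H} = {\<one>\<^bsub>G\<^esub>})"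

end

theory Submission
  imports Defs
begin

(*
  Let \<phi> be a retraction onto H, let g \<notin> H and let 1 \<noteq> h \<in> H with g h (inv g) \<in> H.
  Applying \<phi> shows that k = inv (\<phi> g) g is a nontrivial element of the kernel of \<phi> that
  commutes with h. In a hyperbolic group an element h of infinite order has a power h^m and
  a point u whose orbit u, h^m u, h^2m u, ... is a discrete local geodesic with long steps,
  hence a quasi-geodesic. An element commuting with h moves every point of this orbit by the
  same amount, so it moves points far from the ends of a long stretch close to the orbit;
  therefore every element c commuting with h satisfies inv (h^n) c h^j \<in> F for some n, j
  and one finite set F. By pigeonhole inv (h^n) k^a h^j = inv (h^n') k^b h^j' for some a \<noteq> b;
  applying \<phi>, which fixes h and kills k, and cancelling yields k^a = k^b. So k has torsion,
  contradicting torsion-freeness.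
*)

lemma pigeonhole_atMost:
  assumes "f ` {..n} \<subseteq> B" "finite B" "card B \<le> n"
  obtains a b where "a \<le> n" "b \<le> n" "a \<noteq> b" "f a = f b"
proof -
  have "card (f ` {..n}) < card {..n}"
    using assms card_mono[OF assms(2,1)] by simp
  then show ?thesis
    using pigeonhole[of f "{..n}"] that unfolding inj_on_def by auto
qed

context group
begin

lemma mult_inv_cancel_left [simp]: "y \<in> carrier G \<Longrightarrow> z \<in> carrier G \<Longrightarrow> y \<otimes> (inv y \<otimes> z) = z"
  by (simp add: m_assoc[symmetric])

lemma inv_mult_cancel_left [simp]: "y \<in> carrier G \<Longrightarrow> z \<in> carrier G \<Longrightarrow> inv y \<otimes> (y \<otimes> z) = z"
  by (simp add: m_assoc[symmetric])

lemma nat_pow_eq_imp_eq_of_ord_0: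
  assumes "x \<in> carrier G" "ord x = 0" "x [^] (m::nat) = x [^] (n::nat)"
  shows "m = n"
  using assms infinite_cyclic_subgroup infinite_cyclic_subgroup_order by blast

lemma torsion_free_ord_eq_0: "torsion_free G \<Longrightarrow> x \<in> carrier G \<Longrightarrow> x \<noteq> \<one> \<Longrightarrow> ord x = 0"
  by (auto simp: torsion_free_def ord_eq_0)

lemma retractE:
  assumes "retract H G"
  obtains \<phi> where "subgroup H G" "\<phi> \<in> hom G G" "\<And>x. x \<in> carrier G \<Longrightarrow> \<phi> x \<in> H"
    "\<And>h. h \<in> H \<Longrightarrow> \<phi> h = h"
proof -
  obtain \<phi> where H: "subgroup H G" and \<phi>: "\<phi> \<in> hom G (G\<lparr>carrier := H\<rparr>)" and fixed: "\<forall>h\<in>H. \<phi> h = h"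
    using assms unfolding retract_def by blast
  have "\<phi> \<in> hom G G"
    using \<phi> subgroup.subset[OF H] unfolding hom_def by auto
  moreover have "\<phi> x \<in> H" if "x \<in> carrier G" for x
    using \<phi> that unfolding hom_def by auto
  ultimately show ?thesis
    using that H fixed by blast
qed

lemma retraction_conj_commutes:
  assumes \<phi>: "\<phi> \<in> hom G G" and into: "\<And>x. x \<in> carrier G \<Longrightarrow> \<phi> x \<in> H"
    and fixed: "\<And>h. h \<in> H \<Longrightarrow> \<phi> h = h"
    and g: "g \<in> carrier G" and h: "h \<in> H" "h \<in> carrier G" and conj: "g \<otimes> h \<otimes> inv g \<in> H"
  shows "(inv (\<phi> g) \<otimes> g) \<otimes> h = h \<otimes> (inv (\<phi> g) \<otimes> g)" and "\<phi> (inv (\<phi> g) \<otimes> g) = \<one>"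
proof -
  interpret group_hom G G \<phi>
    using \<phi> by (simp add: group_hom_def group_hom_axioms_def is_group)
  define P where "P = \<phi> g"
  have P: "P \<in> carrier G" "\<phi> P = P"
    using g into fixed by (simp_all add: P_def)
  have conj_eq: "g \<otimes> h \<otimes> inv g = P \<otimes> h \<otimes> inv P"
    using fixed[OF conj] fixed[OF h(1)] g h by (simp add: P_def)
  have "inv P \<otimes> g \<otimes> h = inv P \<otimes> (g \<otimes> h \<otimes> inv g) \<otimes> g"
    using P g h by (simp add: m_assoc)
  also have "\<dots> = h \<otimes> (inv P \<otimes> g)"
    unfolding conj_eq using P g h by (simp add: m_assoc[symmetric])
  finally show "(inv P \<otimes> g) \<otimes> h = h \<otimes> (inv P \<otimes> g)" .
  show "\<phi> (inv P \<otimes> g) = \<one>"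
    using P g by (simp add: P_def[symmetric])
qed

lemma malnormalI:
  assumes H: "subgroup H G"
    and trivial: "\<And>g h. g \<in> carrier G \<Longrightarrow> g \<notin> H \<Longrightarrow> h \<in> H \<Longrightarrow> g \<otimes> h \<otimes> inv g \<in> H \<Longrightarrow> h = \<one>"
  shows "malnormal H G"
  unfolding malnormal_def
proof (intro conjI H ballI equalityI subsetI)
  fix g y assume g: "g \<in> carrier G - H" and "y \<in> H \<inter> {g \<otimes> h \<otimes> inv g |h. h \<in> H}"
  then obtain h where "y \<in> H" "h \<in> H" "y = g \<otimes> h \<otimes> inv g"
    by blast
  then show "y \<in> {\<one>}"
    using trivial[of g h] g by simp
next
  fix g y assume "g \<in> carrier G - H" "y \<in> {\<one>}"
  then have "y \<in> H" "y = g \<otimes> \<one> \<otimes> inv g" "\<one> \<in> H"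
    using subgroup.one_closed[OF H] by auto
  then show "y \<in> H \<inter> {g \<otimes> h \<otimes> inv g |h. h \<in> H}"
    by blast
qed

end

section \<open>Word metrics\<close>

locale word_metric = group G for G :: "('a, 'b) monoid_scheme" (structure) +
  fixes S :: "'a set"
  assumes finite_gens: "finite S" and gens_closed: "S \<subseteq> carrier G"
    and generate_gens: "generate G S = carrier G"
begin

abbreviation len :: "'a \<Rightarrow> nat" where "len \<equiv> word_length G S"
abbreviation wdist :: "'a \<Rightarrow> 'a \<Rightarrow> real" where "wdist \<equiv> word_dist G S"
abbreviation gprod :: "'a \<Rightarrow> 'a \<Rightarrow> 'a \<Rightarrow> real" where "gprod \<equiv> gromov_product G S"
abbreviation letters :: "'a set" where "letters \<equiv> S \<union> m_inv G ` S"

definition word_prod :: "'a list \<Rightarrow> 'a" where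
  "word_prod ws = foldr (\<lambda>a b. a \<otimes> b) ws \<one>"

lemma word_prod_Nil [simp]: "word_prod [] = \<one>"
  and word_prod_Cons [simp]: "word_prod (a # ws) = a \<otimes> word_prod ws"
  by (simp_all add: word_prod_def)

lemma letters_closed: "letters \<subseteq> carrier G"
  using gens_closed by auto

lemma word_prod_closed: "set ws \<subseteq> carrier G \<Longrightarrow> word_prod ws \<in> carrier G"
  by (induction ws) auto

lemma word_prod_append:
  "set ws \<subseteq> carrier G \<Longrightarrow> set vs \<subseteq> carrier G \<Longrightarrow> word_prod (ws @ vs) = word_prod ws \<otimes> word_prod vs"
  by (induction ws) (auto simp: word_prod_closed m_assoc)

lemma inv_word_prod:
  "set ws \<subseteq> carrier G \<Longrightarrow> inv (word_prod ws) = word_prod (rev (map (m_inv G) ws))"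
proof (induction ws)
  case (Cons a ws)
  then have "inv (word_prod (a # ws)) = word_prod (rev (map (m_inv G) ws)) \<otimes> word_prod [inv a]"
    by (simp add: inv_mult_group word_prod_closed)
  also have "\<dots> = word_prod (rev (map (m_inv G) ws) @ [inv a])"
    using Cons.prems by (subst word_prod_append) auto
  finally show ?case by simp
qed simp

lemma word_prod_onto: "x \<in> carrier G \<Longrightarrow> \<exists>ws. set ws \<subseteq> letters \<and> word_prod ws = x"
  unfolding generate_gens[symmetric]
proof (induction rule: generate.induct)
  case one
  show ?case by (intro exI[of _ "[]"]) auto
next
  case (incl h)
  then show ?case using gens_closed by (intro exI[of _ "[h]"]) auto
next
  case (inv h)
  then show ?case using gens_closed by (intro exI[of _ "[inv h]"]) auto
next
  case (eng h1 h2)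
  then obtain w1 w2 where w: "set w1 \<subseteq> letters" "word_prod w1 = h1" "set w2 \<subseteq> letters" "word_prod w2 = h2"
    by blast
  moreover have "set w1 \<subseteq> carrier G" "set w2 \<subseteq> carrier G"
    using w letters_closed by blast+
  ultimately show ?case
    by (intro exI[of _ "w1 @ w2"]) (auto simp: word_prod_append)
qed

lemma geodesic_word:
  "x \<in> carrier G \<Longrightarrow> \<exists>ws. set ws \<subseteq> letters \<and> length ws = len x \<and> word_prod ws = x"
  unfolding word_length_def word_prod_def[symmetric]
  by (rule LeastI_ex) (use word_prod_onto in blast)

lemma word_length_le: "set ws \<subseteq> letters \<Longrightarrow> len (word_prod ws) \<le> length ws"
  unfolding word_length_def word_prod_def by (rule Least_le) blast

lemma word_length_mult:
  assumes "x \<in> carrier G" "y \<in> carrier G"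
  shows "len (x \<otimes> y) \<le> len x + len y"
proof -
  obtain v w where "set v \<subseteq> letters" "length v = len x" "word_prod v = x"
    and "set w \<subseteq> letters" "length w = len y" "word_prod w = y"
    using geodesic_word assms by metis
  then show ?thesis
    using word_length_le[of "v @ w"] letters_closed by (auto simp: word_prod_append)
qed

lemma word_length_inv [simp]:
  assumes "x \<in> carrier G"
  shows "len (inv x) = len x"
proof -
  have le: "len (inv y) \<le> len y" if "y \<in> carrier G" for y
  proof -
    obtain w where w: "set w \<subseteq> letters" "length w = len y" "word_prod w = y"
      using geodesic_word \<open>y \<in> carrier G\<close> by blast
    have "set (rev (map (m_inv G) w)) \<subseteq> letters"
      using w(1) gens_closed by (auto simp: subset_iff)
    then have "len (word_prod (rev (map (m_inv G) w))) \<le> len y"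
      using word_length_le w(2) by fastforce
    moreover have "inv y = word_prod (rev (map (m_inv G) w))"
      using w inv_word_prod letters_closed by blast
    ultimately show ?thesis
      by simp
  qed
  show ?thesis
    using le[of x] le[of "inv x"] assms by simp
qed

lemma word_length_one [simp]: "len \<one> = 0"
  using word_length_le[of "[]"] by simp

lemma finite_word_ball: "finite {x \<in> carrier G. real (len x) \<le> R}"
proof -
  define Ws where "Ws = {ws. set ws \<subseteq> letters \<and> length ws \<le> nat \<lceil>R\<rceil>}"
  have "{x \<in> carrier G. real (len x) \<le> R} \<subseteq> word_prod ` Ws"
  proof
    fix x assume "x \<in> {x \<in> carrier G. real (len x) \<le> R}"
    then have x: "x \<in> carrier G" "real (len x) \<le> R" by auto
    then obtain w where w: "set w \<subseteq> letters" "length w = len x" "word_prod w = x"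
      using geodesic_word by blast
    have "length w \<le> nat \<lceil>R\<rceil>"
      using w x by linarith
    then show "x \<in> word_prod ` Ws"
      using w by (auto simp: Ws_def)
  qed
  moreover have "finite Ws"
    unfolding Ws_def using finite_gens by (intro finite_lists_length_le) auto
  ultimately show ?thesis
    using finite_subset by blast
qed

lemma word_prod_take_segment:
  assumes "set w \<subseteq> carrier G" "i \<le> j"
  shows "inv (word_prod (take i w)) \<otimes> word_prod (take j w) = word_prod (take (j - i) (drop i w))"
proof -
  have wc: "set (take k (drop l w)) \<subseteq> carrier G" for k l
    using assms(1) by (auto dest: in_set_takeD in_set_dropD)
  have "take j w = take i w @ take (j - i) (drop i w)"
    using assms(2) by (metis le_add_diff_inverse take_add)
  then show ?thesis
    using wc[of i 0] wc[of "j - i" i] by (simp add: word_prod_append word_prod_closed)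
qed

lemma wdist_eq: "wdist x y = real (len (inv x \<otimes> y))"
  by (simp add: word_dist_def)

lemma gprod_eq: "gprod w x y = (wdist w x + wdist w y - wdist x y) / 2"
  by (simp add: gromov_product_def)

lemma wdist_nonneg: "0 \<le> wdist x y"
  by (simp add: wdist_eq)

lemma wdist_self [simp]: "x \<in> carrier G \<Longrightarrow> wdist x x = 0"
  by (simp add: wdist_eq)

lemma wdist_one_left: "x \<in> carrier G \<Longrightarrow> wdist \<one> x = real (len x)"
  by (simp add: wdist_eq)

lemma wdist_commute:
  assumes "x \<in> carrier G" "y \<in> carrier G"
  shows "wdist x y = wdist y x"
proof -
  have "inv (inv x \<otimes> y) = inv y \<otimes> x"
    using assms by (simp add: inv_mult_group)
  then show ?thesis
    using assms word_length_inv[of "inv x \<otimes> y"] by (simp add: wdist_eq)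
qed

lemma wdist_triangle:
  assumes "x \<in> carrier G" "y \<in> carrier G" "z \<in> carrier G"
  shows "wdist x z \<le> wdist x y + wdist y z"
proof -
  have "inv x \<otimes> z = (inv x \<otimes> y) \<otimes> (inv y \<otimes> z)"
    using assms by (simp add: m_assoc)
  then show ?thesis
    using assms word_length_mult[of "inv x \<otimes> y" "inv y \<otimes> z"] by (simp add: wdist_eq)
qed

lemma wdist_left_translate:
  "a \<in> carrier G \<Longrightarrow> x \<in> carrier G \<Longrightarrow> y \<in> carrier G \<Longrightarrow> wdist (a \<otimes> x) (a \<otimes> y) = wdist x y"
  by (simp add: wdist_eq inv_mult_group m_assoc[symmetric]) (simp add: m_assoc)

lemma gprod_commute: "x \<in> carrier G \<Longrightarrow> y \<in> carrier G \<Longrightarrow> gprod w x y = gprod w y x"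
  by (simp add: gprod_eq wdist_commute)

lemma gprod_left_translate:
  "a \<in> carrier G \<Longrightarrow> w \<in> carrier G \<Longrightarrow> x \<in> carrier G \<Longrightarrow> y \<in> carrier G \<Longrightarrow>
   gprod (a \<otimes> w) (a \<otimes> x) (a \<otimes> y) = gprod w x y"
  by (simp add: gprod_eq wdist_left_translate)

lemma gprod_add_gprod:
  "a \<in> carrier G \<Longrightarrow> b \<in> carrier G \<Longrightarrow> c \<in> carrier G \<Longrightarrow> gprod c a b + gprod b a c = wdist b c"
  using wdist_commute[of a b] wdist_commute[of c a] wdist_commute[of b c] wdist_commute[of a c]
  by (simp add: gprod_eq field_simps)

lemma gprod_nonneg: "w \<in> carrier G \<Longrightarrow> x \<in> carrier G \<Longrightarrow> y \<in> carrier G \<Longrightarrow> 0 \<le> gprod w x y"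
  using wdist_triangle[of x w y] wdist_commute[of x w] by (simp add: gprod_eq)

lemma gprod_le_wdist: "w \<in> carrier G \<Longrightarrow> x \<in> carrier G \<Longrightarrow> y \<in> carrier G \<Longrightarrow> gprod w x y \<le> wdist w x"
  using wdist_triangle[of w x y] wdist_commute[of x y] by (simp add: gprod_eq)

lemma gprod_base_left [simp]: "w \<in> carrier G \<Longrightarrow> x \<in> carrier G \<Longrightarrow> gprod w w x = 0"
  using wdist_commute[of x w] by (simp add: gprod_eq)

lemma gprod_base_right [simp]: "w \<in> carrier G \<Longrightarrow> x \<in> carrier G \<Longrightarrow> gprod w x w = 0"
  using wdist_commute[of x w] by (simp add: gprod_eq)

lemma geodesic_path:
  assumes "x \<in> carrier G"
  obtains \<gamma> where "\<And>i. \<gamma> i \<in> carrier G" "\<gamma> 0 = \<one>" "\<gamma> (len x) = x"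
    and "\<And>i j. i \<le> j \<Longrightarrow> j \<le> len x \<Longrightarrow> wdist (\<gamma> i) (\<gamma> j) = real (j - i)"
proof -
  obtain w where w: "set w \<subseteq> letters" "length w = len x" "word_prod w = x"
    using geodesic_word assms by blast
  have wc: "set w \<subseteq> carrier G"
    using w(1) letters_closed by blast
  define \<gamma> where "\<gamma> i = word_prod (take i w)" for i
  have \<gamma>c: "\<gamma> i \<in> carrier G" for i
    using wc by (auto simp: \<gamma>_def intro!: word_prod_closed dest: in_set_takeD)
  have \<gamma>0: "\<gamma> 0 = \<one>" and \<gamma>x: "\<gamma> (len x) = x"
    using w by (simp_all add: \<gamma>_def)
  have upper: "len (inv (\<gamma> i) \<otimes> \<gamma> j) \<le> j - i" if "i \<le> j" "j \<le> len x" for i j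
  proof -
    have "len (inv (\<gamma> i) \<otimes> \<gamma> j) \<le> length (take (j - i) (drop i w))"
      unfolding \<gamma>_def word_prod_take_segment[OF wc that(1)]
      using w(1) by (intro word_length_le) (auto dest: in_set_takeD in_set_dropD)
    then show ?thesis
      by simp
  qed
  have "wdist (\<gamma> i) (\<gamma> j) = real (j - i)" if "i \<le> j" "j \<le> len x" for i j
  proof -
    have "x = \<gamma> i \<otimes> (inv (\<gamma> i) \<otimes> \<gamma> j) \<otimes> (inv (\<gamma> j) \<otimes> x)"
      using \<gamma>c assms by (simp add: m_assoc[symmetric])
    then have "len x \<le> len (\<gamma> i \<otimes> (inv (\<gamma> i) \<otimes> \<gamma> j)) + len (inv (\<gamma> j) \<otimes> x)"
      using \<gamma>c assms word_length_mult by (metis inv_closed m_closed)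
    also have "\<dots> \<le> len (\<gamma> i) + len (inv (\<gamma> i) \<otimes> \<gamma> j) + len (inv (\<gamma> j) \<otimes> x)"
      using \<gamma>c word_length_mult[of "\<gamma> i" "inv (\<gamma> i) \<otimes> \<gamma> j"] by simp
    finally show ?thesis
      using upper[of 0 i] upper[of j "len x"] upper[OF that] that \<gamma>0 \<gamma>x \<gamma>c by (simp add: wdist_eq)
  qed
  then show ?thesis
    using that \<gamma>c \<gamma>0 \<gamma>x by blast
qed

lemma exists_midpoint:
  assumes x: "x \<in> carrier G" and y: "y \<in> carrier G"
  obtains m where "m \<in> carrier G" "wdist x m + wdist m y = wdist x y"
    and "wdist x m \<le> wdist m y" "wdist x y \<le> 2 * wdist x m + 1"
proof -
  define a where "a = len (inv x \<otimes> y)"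
  obtain \<gamma> where \<gamma>c: "\<And>i. \<gamma> i \<in> carrier G" and \<gamma>0: "\<gamma> 0 = \<one>" and \<gamma>a: "\<gamma> a = inv x \<otimes> y"
    and \<gamma>dist: "\<And>i j. i \<le> j \<Longrightarrow> j \<le> a \<Longrightarrow> wdist (\<gamma> i) (\<gamma> j) = real (j - i)"
    using geodesic_path[of "inv x \<otimes> y"] x y unfolding a_def by blast
  define h where "h = a div 2"
  have "wdist x (x \<otimes> \<gamma> h) = h"
    using \<gamma>dist[of 0 h] x \<gamma>c wdist_left_translate[of x \<one> "\<gamma> h"] by (simp add: \<gamma>0 h_def)
  moreover have "wdist (x \<otimes> \<gamma> h) y = a - h"
    using \<gamma>dist[of h a] x y \<gamma>c wdist_left_translate[of x "\<gamma> h" "\<gamma> a"] by (simp add: \<gamma>a h_def)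
  moreover have "wdist x y = a"
    by (simp add: wdist_eq a_def)
  ultimately show ?thesis
    using that[of "x \<otimes> \<gamma> h"] x \<gamma>c by (simp add: h_def)
qed

lemma exists_conj_minimal:
  assumes g: "g \<in> carrier G"
  obtains u where "u \<in> carrier G"
    and "\<And>w. w \<in> carrier G \<Longrightarrow> len (inv u \<otimes> g \<otimes> u) \<le> len (inv w \<otimes> (inv u \<otimes> g \<otimes> u) \<otimes> w)"
proof -
  obtain u where u: "u \<in> carrier G"
    and min: "\<And>v. v \<in> carrier G \<Longrightarrow> len (inv u \<otimes> g \<otimes> u) \<le> len (inv v \<otimes> g \<otimes> v)"
    using ex_has_least_nat[of "\<lambda>u. u \<in> carrier G" \<one> "\<lambda>u. len (inv u \<otimes> g \<otimes> u)"] by auto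
  have "inv w \<otimes> (inv u \<otimes> g \<otimes> u) \<otimes> w = inv (u \<otimes> w) \<otimes> g \<otimes> (u \<otimes> w)" if "w \<in> carrier G" for w
    using u g that by (simp add: inv_mult_group m_assoc)
  then show ?thesis
    using that u min by simp
qed

lemma exists_quasi_centre:
  assumes "finite Q" "Q \<noteq> {}"
  obtains c r where "c \<in> carrier G" and "\<And>q. q \<in> Q \<Longrightarrow> wdist c q \<le> r"
    and "\<And>c'. c' \<in> carrier G \<Longrightarrow> \<exists>q\<in>Q. r \<le> wdist c' q"
proof -
  define radius where "radius c = Max ((\<lambda>q. len (inv c \<otimes> q)) ` Q)" for c
  obtain c where c: "c \<in> carrier G" and min: "\<And>c'. c' \<in> carrier G \<Longrightarrow> radius c \<le> radius c'"
    using ex_has_least_nat[of "\<lambda>c. c \<in> carrier G" \<one> radius] by auto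
  have "wdist c q \<le> radius c" if "q \<in> Q" for q
    using assms that by (simp add: wdist_eq radius_def)
  moreover have "\<exists>q\<in>Q. radius c \<le> wdist c' q" if "c' \<in> carrier G" for c'
  proof -
    have "radius c' \<in> (\<lambda>q. len (inv c' \<otimes> q)) ` Q"
      unfolding radius_def using assms by (intro Max_in) auto
    then show ?thesis
      using min[OF that] by (auto simp: wdist_eq)
  qed
  ultimately show ?thesis
    using that c by (metis of_nat_le_iff)
qed

lemma orbit_shift_wdist_le:
  fixes i k m :: nat
  assumes h: "h \<in> carrier G" and x: "x \<in> carrier G" and c: "c \<in> carrier G"
    and near: "\<And>i. i < m \<Longrightarrow> wdist c (h [^] i \<otimes> x) \<le> r" and "k \<le> m" "i < m"
  shows "wdist (h [^] k \<otimes> c) (h [^] i \<otimes> x) \<le> r + wdist x (h [^] m \<otimes> x)"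
proof (cases "k \<le> i")
  case True
  then have "h [^] i \<otimes> x = h [^] k \<otimes> (h [^] (i - k) \<otimes> x)"
    using h x by (simp add: m_assoc[symmetric] nat_pow_mult)
  then have "wdist (h [^] k \<otimes> c) (h [^] i \<otimes> x) = wdist c (h [^] (i - k) \<otimes> x)"
    using h x c by (simp add: wdist_left_translate)
  moreover have "wdist c (h [^] (i - k) \<otimes> x) \<le> r"
    using near \<open>i < m\<close> by simp
  ultimately show ?thesis
    using wdist_nonneg[of x "h [^] m \<otimes> x"] by linarith
next
  case False
  define j where "j = i + m - k"
  have j: "j < m" "h [^] k \<otimes> (h [^] j \<otimes> x) = h [^] i \<otimes> (h [^] m \<otimes> x)"
    using False \<open>k \<le> m\<close> h x by (simp_all add: j_def m_assoc[symmetric] nat_pow_mult)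
  have "wdist (h [^] k \<otimes> c) (h [^] i \<otimes> x)
      \<le> wdist (h [^] k \<otimes> c) (h [^] k \<otimes> (h [^] j \<otimes> x)) + wdist (h [^] k \<otimes> (h [^] j \<otimes> x)) (h [^] i \<otimes> x)"
    using h x c by (simp add: wdist_triangle)
  also have "wdist (h [^] k \<otimes> c) (h [^] k \<otimes> (h [^] j \<otimes> x)) = wdist c (h [^] j \<otimes> x)"
    using h x c by (simp add: wdist_left_translate)
  also have "wdist (h [^] k \<otimes> (h [^] j \<otimes> x)) (h [^] i \<otimes> x) = wdist x (h [^] m \<otimes> x)"
    using h x unfolding j(2) by (simp add: wdist_left_translate wdist_commute[of "h [^] m \<otimes> x"])
  finally show ?thesis
    using near[OF j(1)] by simp
qed

definition straight_chain :: "(nat \<Rightarrow> 'a) \<Rightarrow> nat \<Rightarrow> real \<Rightarrow> real \<Rightarrow> bool" where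
  "straight_chain x N p \<tau> \<longleftrightarrow> (\<forall>i. x i \<in> carrier G) \<and>
     (\<forall>i<N. wdist (x i) (x (Suc i)) = p) \<and>
     (\<forall>i. Suc (Suc i) \<le> N \<longrightarrow> gprod (x (Suc i)) (x i) (x (Suc (Suc i))) \<le> \<tau>)"

lemma straight_chainD:
  assumes "straight_chain x N p \<tau>"
  shows "x i \<in> carrier G" and "i < N \<Longrightarrow> wdist (x i) (x (Suc i)) = p"
    and "Suc (Suc i) \<le> N \<Longrightarrow> gprod (x (Suc i)) (x i) (x (Suc (Suc i))) \<le> \<tau>"
  using assms by (auto simp: straight_chain_def)

lemma straight_chain_prefix: "straight_chain x N p \<tau> \<Longrightarrow> l \<le> N \<Longrightarrow> straight_chain x l p \<tau>"
  by (auto simp: straight_chain_def)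

lemma straight_chain_rev:
  assumes chain: "straight_chain x N p \<tau>"
  shows "straight_chain (\<lambda>i. x (N - i)) N p \<tau>"
  unfolding straight_chain_def
proof (intro conjI allI impI)
  fix i
  show "x (N - i) \<in> carrier G"
    using chain by (simp add: straight_chainD)
  assume "i < N"
  then have "N - i = Suc (N - Suc i)"
    by simp
  then show "wdist (x (N - i)) (x (N - Suc i)) = p"
    using chain \<open>i < N\<close> by (simp add: straight_chainD wdist_commute)
next
  fix i assume "Suc (Suc i) \<le> N"
  moreover define m where "m = N - Suc (Suc i)"
  ultimately have m: "N - i = Suc (Suc m)" "N - Suc i = Suc m" "Suc (Suc m) \<le> N"
    by auto
  show "gprod (x (N - Suc i)) (x (N - i)) (x (N - Suc (Suc i))) \<le> \<tau>"
    using chain m by (simp add: m_def[symmetric] straight_chainD gprod_commute)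
qed

lemma straight_chain_left_translate:
  "straight_chain x N p \<tau> \<Longrightarrow> a \<in> carrier G \<Longrightarrow> straight_chain (\<lambda>i. a \<otimes> x i) N p \<tau>"
  by (simp add: straight_chain_def wdist_left_translate gprod_left_translate)

lemma orbit_straight_chain:
  assumes g: "g \<in> carrier G" and u: "u \<in> carrier G"
  shows "straight_chain (\<lambda>i. g [^] i \<otimes> u) N (wdist u (g \<otimes> u)) (gprod (g \<otimes> u) u (g \<otimes> (g \<otimes> u)))"
  unfolding straight_chain_def
proof (intro conjI allI impI)
  fix i
  have shift: "g [^] Suc i \<otimes> u = g [^] i \<otimes> (g \<otimes> u)"
    "g [^] Suc (Suc i) \<otimes> u = g [^] i \<otimes> (g \<otimes> (g \<otimes> u))"
    using g u by (simp_all add: m_assoc)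
  show "g [^] i \<otimes> u \<in> carrier G"
    using g u by simp
  show "wdist (g [^] i \<otimes> u) (g [^] Suc i \<otimes> u) = wdist u (g \<otimes> u)"
    unfolding shift using g u by (simp add: wdist_left_translate)
  show "gprod (g [^] Suc i \<otimes> u) (g [^] i \<otimes> u) (g [^] Suc (Suc i) \<otimes> u) \<le> gprod (g \<otimes> u) u (g \<otimes> (g \<otimes> u))"
    unfolding shift using g u by (simp add: gprod_left_translate)
qed

lemma chain_crosses_sphere:
  assumes yc: "\<And>i. y i \<in> carrier G" and step: "\<And>i. i < N \<Longrightarrow> wdist (y i) (y (Suc i)) \<le> p"
    and "0 \<le> p" "0 \<le> s" "s \<le> wdist (y 0) (y N)"
  obtains j where "j \<le> N" "s - p \<le> wdist (y 0) (y j)" "wdist (y 0) (y j) \<le> s"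
proof -
  define J where "J = {j. j \<le> N \<and> wdist (y 0) (y j) \<le> s}"
  define j where "j = Max J"
  have "0 \<in> J" "finite J"
    using yc assms(4) by (simp_all add: J_def)
  then have "j \<in> J" and j_max: "\<And>i. i \<in> J \<Longrightarrow> i \<le> j"
    unfolding j_def by (auto intro: Max_in)
  then have jN: "j \<le> N" and upper: "wdist (y 0) (y j) \<le> s"
    by (auto simp: J_def)
  have "s - p \<le> wdist (y 0) (y j)"
  proof (cases "j = N")
    case True
    then show ?thesis
      using assms(3,5) by simp
  next
    case False
    then have "Suc j \<le> N" "Suc j \<notin> J"
      using jN j_max[of "Suc j"] by auto
    then have "s < wdist (y 0) (y (Suc j))"
      by (simp add: J_def)
    moreover have "wdist (y 0) (y (Suc j)) \<le> wdist (y 0) (y j) + wdist (y j) (y (Suc j))"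
      using yc by (simp add: wdist_triangle)
    ultimately show ?thesis
      using step[of j] \<open>Suc j \<le> N\<close> by simp
  qed
  then show ?thesis
    using that jN upper by blast
qed

end

section \<open>Hyperbolic word metrics\<close>

locale hyperbolic_word_metric = word_metric +
  fixes \<delta> :: real
  assumes delta_nonneg: "0 \<le> \<delta>"
    and four_point: "\<lbrakk>w \<in> carrier G; x \<in> carrier G; y \<in> carrier G; z \<in> carrier G\<rbrakk> \<Longrightarrow>
      min (gromov_product G S w x y) (gromov_product G S w y z) - \<delta> \<le> gromov_product G S w x z"
begin

lemma wdist_quasi_centres_le:
  assumes Q: "Q \<subseteq> carrier G" and c: "c1 \<in> carrier G" "c2 \<in> carrier G"
    and near: "\<And>q. q \<in> Q \<Longrightarrow> wdist c1 q \<le> R" "\<And>q. q \<in> Q \<Longrightarrow> wdist c2 q \<le> R"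
    and far: "\<And>c. c \<in> carrier G \<Longrightarrow> \<exists>q\<in>Q. r \<le> wdist c q"
  shows "wdist c1 c2 \<le> 2 * (R - r) + 4 * \<delta> + 1"
proof -
  obtain m where m: "m \<in> carrier G" and split: "wdist c1 m + wdist m c2 = wdist c1 c2"
    and half: "wdist c1 m \<le> wdist m c2" "wdist c1 c2 \<le> 2 * wdist c1 m + 1"
    using exists_midpoint[OF c] by blast
  obtain q where q: "q \<in> Q" "r \<le> wdist m q"
    using far[OF m] by blast
  have qc: "q \<in> carrier G"
    using q Q by blast
  have "gprod m c1 c2 = 0"
    using split c m by (simp add: gprod_eq wdist_commute[of m c1])
  moreover have "min (gprod m c1 q) (gprod m q c2) - \<delta> \<le> gprod m c1 c2"
    using m c qc by (simp add: four_point)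
  ultimately consider "gprod m c1 q \<le> \<delta>" | "gprod m q c2 \<le> \<delta>"
    by linarith
  then have "wdist m q \<le> 2 * \<delta> + R - wdist c1 m"
  proof cases
    case 1
    then show ?thesis
      using near(1)[OF q(1)] c m by (simp add: gprod_eq wdist_commute[of m c1])
  next
    case 2
    then show ?thesis
      using near(2)[OF q(1)] half(1) c qc by (simp add: gprod_eq wdist_commute[of q c2])
  qed
  then show ?thesis
    using q(2) half(2) by argo
qed

lemma orbit_quasi_centre_displacement:
  fixes m :: nat
  assumes h: "h \<in> carrier G" and x: "x \<in> carrier G" and "0 < m"
    and short: "wdist x (h [^] m \<otimes> x) \<le> L"
  obtains c where "c \<in> carrier G" "\<And>k. k \<le> m \<Longrightarrow> wdist c (h [^] k \<otimes> c) \<le> 2 * L + 4 * \<delta> + 1"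
proof -
  define Q where "Q = (\<lambda>i. h [^] i \<otimes> x) ` {..<m}"
  have Q: "Q \<subseteq> carrier G" "finite Q" "Q \<noteq> {}"
    using h x \<open>0 < m\<close> by (auto simp: Q_def)
  obtain c r where c: "c \<in> carrier G" and near: "\<And>q. q \<in> Q \<Longrightarrow> wdist c q \<le> r"
    and far: "\<And>c'. c' \<in> carrier G \<Longrightarrow> \<exists>q\<in>Q. r \<le> wdist c' q"
    using exists_quasi_centre[OF Q(2,3)] by blast
  have near_orbit: "wdist c (h [^] i \<otimes> x) \<le> r" if "i < m" for i
    using near that by (simp add: Q_def)
  have "wdist c (h [^] k \<otimes> c) \<le> 2 * (r + L - r) + 4 * \<delta> + 1" if "k \<le> m" for k
  proof (rule wdist_quasi_centres_le[OF Q(1) c _ _ _ far])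
    show "wdist c q \<le> r + L" if "q \<in> Q" for q
      using near[OF that] short wdist_nonneg[of x "h [^] m \<otimes> x"] by linarith
    show "wdist (h [^] k \<otimes> c) q \<le> r + L" if "q \<in> Q" for q
    proof -
      obtain i where "i < m" "q = h [^] i \<otimes> x"
        using \<open>q \<in> Q\<close> by (auto simp: Q_def)
      then have "wdist (h [^] k \<otimes> c) q \<le> r + wdist x (h [^] m \<otimes> x)"
        using orbit_shift_wdist_le[OF h x c near_orbit \<open>k \<le> m\<close>] by simp
      then show ?thesis
        using short by linarith
    qed
  qed (use h c in simp)
  then show ?thesis
    using that c by simp
qed

lemma infinite_order_power_conjugates_long:
  fixes L :: real
  assumes h: "h \<in> carrier G" and ord: "ord h = 0"
  obtains m :: nat where "\<And>x. x \<in> carrier G \<Longrightarrow> L < len (inv x \<otimes> h [^] m \<otimes> x)"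
proof -
  define B where "B = {y \<in> carrier G. real (len y) \<le> 2 * L + 4 * \<delta> + 1}"
  define m where "m = Suc (card B)"
  have "L < len (inv x \<otimes> h [^] m \<otimes> x)" if x: "x \<in> carrier G" for x
  proof (rule ccontr)
    assume "\<not> L < len (inv x \<otimes> h [^] m \<otimes> x)"
    then have "wdist x (h [^] m \<otimes> x) \<le> L"
      using h x by (simp add: wdist_eq m_assoc)
    moreover have "0 < m"
      by (simp add: m_def)
    ultimately obtain c where c: "c \<in> carrier G"
      and moved: "\<And>k. k \<le> m \<Longrightarrow> wdist c (h [^] k \<otimes> c) \<le> 2 * L + 4 * \<delta> + 1"
      using orbit_quasi_centre_displacement[OF h x] by blast
    have "(\<lambda>k. inv c \<otimes> h [^] k \<otimes> c) ` {..m} \<subseteq> B"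
      using moved h c by (auto simp: B_def wdist_eq m_assoc)
    moreover have "finite B"
      unfolding B_def by (rule finite_word_ball)
    moreover have "card B \<le> m"
      by (simp add: m_def)
    ultimately obtain a b :: nat where "a \<noteq> b" "inv c \<otimes> h [^] a \<otimes> c = inv c \<otimes> h [^] b \<otimes> c"
      by (rule pigeonhole_atMost) blast
    then show False
      using nat_pow_eq_imp_eq_of_ord_0[OF h ord, of a b] h c by simp
  qed
  then show ?thesis
    by (rule that)
qed

lemma wdist_le_of_gprod_ge:
  assumes "w \<in> carrier G" "a \<in> carrier G" "b \<in> carrier G" "y \<in> carrier G" "z \<in> carrier G"
    and "wdist w y = t" "wdist w z = t"
    and "t \<le> gprod w y a" "t \<le> gprod w a b" "t \<le> gprod w b z"
  shows "wdist y z \<le> 4 * \<delta>"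
proof -
  have "min (gprod w y a) (gprod w a z) - \<delta> \<le> gprod w y z"
    and "min (gprod w a b) (gprod w b z) - \<delta> \<le> gprod w a z"
    using assms(1-5) by (simp_all add: four_point)
  then have "t - 2 * \<delta> \<le> gprod w y z"
    using assms(8-10) delta_nonneg by linarith
  then show ?thesis
    using assms(6,7) by (simp add: gprod_eq)
qed

lemma gprod_lt_of_conj_minimal:
  assumes g: "g \<in> carrier G" and min: "\<And>w. w \<in> carrier G \<Longrightarrow> len g \<le> len (inv w \<otimes> g \<otimes> w)"
    and T: "2 * \<delta> < real T" "2 * T \<le> len g"
  shows "gprod g \<one> (g \<otimes> g) < T"
proof (rule ccontr)
  assume "\<not> gprod g \<one> (g \<otimes> g) < T"
  then have far: "T \<le> gprod g \<one> (g \<otimes> g)"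
    by simp
  define p where "p = len g"
  obtain \<gamma> where \<gamma>c: "\<And>i. \<gamma> i \<in> carrier G" and \<gamma>0: "\<gamma> 0 = \<one>" and \<gamma>p: "\<gamma> p = g"
    and \<gamma>dist: "\<And>i j. i \<le> j \<Longrightarrow> j \<le> p \<Longrightarrow> wdist (\<gamma> i) (\<gamma> j) = real (j - i)"
    using geodesic_path[OF g] unfolding p_def by blast
  have Tp: "2 * T \<le> p"
    using T by (simp add: p_def)
  define y where "y = \<gamma> (p - T)"
  define w where "w = \<gamma> T"
  define z where "z = g \<otimes> w"
  have yc: "y \<in> carrier G" and wc: "w \<in> carrier G" and zc: "z \<in> carrier G"
    using \<gamma>c g by (simp_all add: y_def w_def z_def)
  have "wdist y g = T" "wdist \<one> y = p - T" "wdist w y = p - 2 * T"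
    using \<gamma>dist[of "p - T" p] \<gamma>dist[of 0 "p - T"] \<gamma>dist[of T "p - T"] Tp
    by (simp_all add: y_def w_def \<gamma>0 \<gamma>p)
  then have gy: "wdist g y = T" and y1: "wdist y \<one> = p - T" and wy: "wdist w y = p - 2 * T"
    using g yc by (simp_all add: wdist_commute)
  have "wdist g \<one> = p" "wdist g (g \<otimes> g) = p"
    using g wdist_left_translate[of g \<one> g] by (simp_all add: wdist_commute[of g] wdist_one_left p_def)
  moreover have gz: "wdist g z = T" and "wdist (g \<otimes> g) z = p - T"
    using \<gamma>dist[of 0 T] \<gamma>dist[of T p] Tp \<gamma>c \<gamma>0 \<gamma>p g wdist_left_translate[of g \<one> w]
      wdist_left_translate[of g g w] wdist_commute[of g w]
    by (simp_all add: z_def w_def)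
  ultimately have "gprod g y \<one> = T" and "gprod g (g \<otimes> g) z = T"
    using gy y1 Tp by (simp_all add: gprod_eq)
  then have "wdist y z \<le> 4 * \<delta>"
    using far g yc zc gy gz by (intro wdist_le_of_gprod_ge[of g \<one> "g \<otimes> g" y z T]) simp_all
  moreover have "len (inv w \<otimes> g \<otimes> w) = wdist w z"
    using g wc by (simp add: wdist_eq z_def m_assoc)
  moreover have "wdist w z \<le> wdist w y + wdist y z"
    using wc yc zc by (rule wdist_triangle)
  ultimately have "len (inv w \<otimes> g \<otimes> w) < len g"
    using wy T Tp by (simp add: p_def)
  then show False
    using min[OF wc] by simp
qed

lemma infinite_order_straight_orbit:
  assumes h: "h \<in> carrier G" and ord: "ord h = 0"
  obtains m :: nat and u where "u \<in> carrier G"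
    and "2 * gprod (h [^] m \<otimes> u) u (h [^] m \<otimes> (h [^] m \<otimes> u)) + 3 * \<delta> < wdist u (h [^] m \<otimes> u)"
proof -
  define T :: nat where "T = nat \<lceil>2 * \<delta>\<rceil> + 1"
  have T: "2 * \<delta> < T"
    unfolding T_def using delta_nonneg by linarith
  obtain m :: nat where long: "\<And>x. x \<in> carrier G \<Longrightarrow> 2 * real T + 3 * \<delta> < len (inv x \<otimes> h [^] m \<otimes> x)"
    by (rule infinite_order_power_conjugates_long[OF h ord, where L = "2 * real T + 3 * \<delta>"]) blast
  define g0 where "g0 = h [^] m"
  have g0: "g0 \<in> carrier G"
    using h by (simp add: g0_def)
  obtain u where u: "u \<in> carrier G"
    and min: "\<And>w. w \<in> carrier G \<Longrightarrow> len (inv u \<otimes> g0 \<otimes> u) \<le> len (inv w \<otimes> (inv u \<otimes> g0 \<otimes> u) \<otimes> w)"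
    by (rule exists_conj_minimal[OF g0]) blast
  \<comment> \<open>The orbit of u under g0 is the u-translate of the orbit of 1 under g.\<close>
  define g where "g = inv u \<otimes> g0 \<otimes> u"
  have g: "g \<in> carrier G" and g_long: "2 * real T + 3 * \<delta> < len g"
    using g0 u long[OF u] by (simp_all add: g_def g0_def)
  have "gprod g \<one> (g \<otimes> g) < T"
    using gprod_lt_of_conj_minimal[OF g min[folded g_def]] T g_long delta_nonneg by simp
  moreover have "g0 \<otimes> u = u \<otimes> g" "g0 \<otimes> (g0 \<otimes> u) = u \<otimes> (g \<otimes> g)"
    using g0 u by (simp_all add: g_def m_assoc)
  then have "gprod (g0 \<otimes> u) u (g0 \<otimes> (g0 \<otimes> u)) = gprod g \<one> (g \<otimes> g)"
    using gprod_left_translate[of u g \<one> "g \<otimes> g"] g u by simp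
  moreover have "wdist u (g0 \<otimes> u) = len g"
    using g0 u by (simp add: wdist_eq g_def m_assoc)
  ultimately show ?thesis
    using that[of u m] u g_long by (simp add: g0_def)
qed

section \<open>Straight chains in hyperbolic groups\<close>

lemma straight_chain_gprod_step:
  assumes chain: "straight_chain x N p \<tau>" and "0 \<le> \<tau>" "2 * \<tau> + 2 * \<delta> < p"
  shows "n < N \<Longrightarrow> gprod (x n) (x 0) (x (Suc n)) \<le> \<tau> + \<delta>"
proof (induction n)
  case 0
  then show ?case
    using chain assms(2) delta_nonneg by (simp add: straight_chainD)
next
  case (Suc n)
  have xc: "\<And>i. x i \<in> carrier G"
    using chain by (simp add: straight_chainD)
  have "gprod (x (Suc n)) (x 0) (x n) + gprod (x n) (x 0) (x (Suc n)) = p"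
    using Suc.prems chain xc by (simp add: gprod_add_gprod straight_chainD)
  then have "p - \<tau> - \<delta> \<le> gprod (x (Suc n)) (x n) (x 0)"
    using Suc xc by (simp add: gprod_commute)
  moreover have "min (gprod (x (Suc n)) (x n) (x 0)) (gprod (x (Suc n)) (x 0) (x (Suc (Suc n)))) - \<delta>
      \<le> gprod (x (Suc n)) (x n) (x (Suc (Suc n)))"
    using xc by (simp add: four_point)
  moreover have "gprod (x (Suc n)) (x n) (x (Suc (Suc n))) \<le> \<tau>"
    using chain Suc.prems by (simp add: straight_chainD)
  ultimately show ?case
    using assms(3) by linarith
qed

lemma straight_chain_wdist_ge:
  assumes chain: "straight_chain x N p \<tau>" and "0 \<le> \<tau>" "2 * \<tau> + 2 * \<delta> < p"
  shows "n \<le> N \<Longrightarrow> n * (p - 2 * \<tau> - 2 * \<delta>) \<le> wdist (x 0) (x n)"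
proof (induction n)
  case (Suc n)
  have xc: "\<And>i. x i \<in> carrier G"
    using chain by (simp add: straight_chainD)
  have "gprod (x n) (x 0) (x (Suc n)) \<le> \<tau> + \<delta>"
    using straight_chain_gprod_step[OF assms] Suc.prems by simp
  moreover have "wdist (x n) (x (Suc n)) = p"
    using chain Suc.prems by (simp add: straight_chainD)
  ultimately have "wdist (x 0) (x n) + p - 2 * (\<tau> + \<delta>) \<le> wdist (x 0) (x (Suc n))"
    using xc by (simp add: gprod_eq wdist_commute[of "x n"])
  then show ?case
    using Suc by (simp add: algebra_simps)
qed (simp add: wdist_nonneg)

lemma straight_chain_gprod_le:
  assumes chain: "straight_chain x N p \<tau>" and "0 \<le> \<tau>" "2 * \<tau> + 3 * \<delta> < p"
    and "j \<le> l" "l \<le> N"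
  shows "gprod (x j) (x 0) (x l) \<le> \<tau> + 2 * \<delta>"
proof (cases "j = l")
  case True
  then show ?thesis
    using chain assms(2) delta_nonneg by (simp add: straight_chainD)
next
  case False
  then have jl: "j < l"
    using assms(4) by simp
  have xc: "\<And>i. x i \<in> carrier G"
    using chain by (simp add: straight_chainD)
  have p: "2 * \<tau> + 2 * \<delta> < p"
    using assms(3) delta_nonneg by linarith
  have "gprod (x j) (x 0) (x (Suc j)) \<le> \<tau> + \<delta>"
    using straight_chain_gprod_step[OF chain assms(2) p] jl assms(5) by simp
  moreover have "gprod (x (Suc j)) (x l) (x j) \<le> \<tau> + \<delta>"
  proof -
    have "straight_chain (\<lambda>i. x (l - i)) l p \<tau>"
      using straight_chain_rev straight_chain_prefix chain assms(5) by blast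
    from straight_chain_gprod_step[OF this assms(2) p, of "l - Suc j"]
    show ?thesis
      using jl by (simp add: Suc_diff_Suc)
  qed
  moreover have "gprod (x j) (x l) (x (Suc j)) + gprod (x (Suc j)) (x l) (x j) = p"
    using xc chain jl assms(5) by (simp add: gprod_add_gprod straight_chainD wdist_commute[of "x (Suc j)"])
  moreover have "min (gprod (x j) (x 0) (x l)) (gprod (x j) (x l) (x (Suc j))) - \<delta>
      \<le> gprod (x j) (x 0) (x (Suc j))"
    using xc by (simp add: four_point)
  ultimately show ?thesis
    using assms(3) by linarith
qed

lemma exists_near_chain_point:
  assumes yc: "\<And>i. y i \<in> carrier G" and zc: "z \<in> carrier G"
    and step: "\<And>i. i < N \<Longrightarrow> wdist (y i) (y (Suc i)) \<le> p"
    and thin: "\<And>j. j \<le> N \<Longrightarrow> gprod (y j) (y 0) (y N) \<le> C"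
    and "0 \<le> C" "0 \<le> p" and close: "gprod z (y 0) (y N) \<le> C'"
  shows "\<exists>j\<le>N. wdist z (y j) \<le> C' + p + 2 * C + 2 * \<delta>"
proof -
  define A where "A = y 0"
  define B where "B = y N"
  have Ac: "A \<in> carrier G" and Bc: "B \<in> carrier G"
    using yc by (simp_all add: A_def B_def)
  define s where "s = gprod A z B"
  have "0 \<le> s" "s \<le> wdist A B"
    using Ac Bc zc by (simp_all add: s_def gprod_nonneg gprod_le_wdist gprod_commute[of z B])
  then obtain j where jN: "j \<le> N" and cross: "s - p \<le> wdist A (y j)" "wdist A (y j) \<le> s"
    using chain_crosses_sphere[of y N p s, OF yc step \<open>0 \<le> p\<close>] unfolding A_def B_def by blast
  have yj: "y j \<in> carrier G"
    using yc by simp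
  have "gprod (y j) A B + gprod A (y j) B = wdist A (y j)"
    using gprod_add_gprod[of B A "y j"] Ac Bc yj by (simp add: gprod_commute)
  then have "wdist A (y j) - C \<le> gprod A (y j) B"
    using thin[OF jN] by (simp add: A_def B_def)
  moreover have "min (gprod A z B) (gprod A B (y j)) - \<delta> \<le> gprod A z (y j)"
    using Ac Bc zc yj by (simp add: four_point)
  ultimately have "wdist A (y j) - C - \<delta> \<le> gprod A z (y j)"
    using cross(2) \<open>0 \<le> C\<close> Bc yj by (simp add: s_def gprod_commute[of B])
  then have "wdist z (y j) \<le> wdist A z - wdist A (y j) + 2 * C + 2 * \<delta>"
    by (simp add: gprod_eq)
  moreover have "gprod A B z + gprod z B A = wdist A z"
    using gprod_add_gprod[of B A z] Ac Bc zc by simp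
  then have "wdist A z - s \<le> C'"
    using close Ac Bc zc by (simp add: s_def A_def B_def gprod_commute)
  ultimately show ?thesis
    using jN cross(1) by (intro exI[of _ j]) linarith
qed

lemma gprod_le_of_close_endpoints:
  assumes c: "z \<in> carrier G" "a \<in> carrier G" "b \<in> carrier G" "a' \<in> carrier G" "b' \<in> carrier G"
    and thin: "gprod z a b \<le> C" and close: "wdist a a' \<le> E" "wdist b b' \<le> E"
    and far: "E + C + 2 * \<delta> < wdist z a" "E + C + 2 * \<delta> < wdist z b"
  shows "gprod z a' b' \<le> C + 2 * \<delta>"
proof (rule ccontr)
  assume "\<not> gprod z a' b' \<le> C + 2 * \<delta>"
  moreover have "wdist z a - E \<le> gprod z a a'" "wdist z b - E \<le> gprod z b' b"
    using c close wdist_triangle[of z a' a] wdist_triangle[of z b' b]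
    by (simp_all add: gprod_eq wdist_commute[of a' a] wdist_commute[of b' b])
  moreover have "min (gprod z a' b') (gprod z b' b) - \<delta> \<le> gprod z a' b"
    and "min (gprod z a a') (gprod z a' b) - \<delta> \<le> gprod z a b"
    using c by (simp_all add: four_point)
  ultimately show False
    using thin far delta_nonneg by (auto simp: min_def split: if_split_asm)
qed

lemma straight_chain_translate_near:
  assumes chain: "straight_chain x N p \<tau>" and \<tau>: "0 \<le> \<tau>" and p: "2 * \<tau> + 3 * \<delta> < p"
    and a: "a \<in> carrier G" and "n \<le> N"
    and moved: "wdist (x 0) (a \<otimes> x 0) \<le> E" "wdist (x N) (a \<otimes> x N) \<le> E"
    and far: "E + \<tau> + 4 * \<delta> < wdist (x n) (x 0)" "E + \<tau> + 4 * \<delta> < wdist (x n) (x N)"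
  obtains j where "j \<le> N" "wdist (x n) (a \<otimes> x j) \<le> 3 * \<tau> + p + 10 * \<delta>"
proof -
  define y where "y i = a \<otimes> x i" for i
  have xc: "x i \<in> carrier G" and yc: "y i \<in> carrier G" for i
    using chain a by (simp_all add: y_def straight_chainD)
  have thin_x: "gprod (x j) (x 0) (x N) \<le> \<tau> + 2 * \<delta>" if "j \<le> N" for j
    using straight_chain_gprod_le[OF chain \<tau> p that order_refl] .
  have thin_y: "gprod (y j) (y 0) (y N) \<le> \<tau> + 2 * \<delta>" if "j \<le> N" for j
    using thin_x[OF that] a xc by (simp add: y_def gprod_left_translate)
  have "gprod (x n) (y 0) (y N) \<le> (\<tau> + 2 * \<delta>) + 2 * \<delta>"
    using moved far
    by (intro gprod_le_of_close_endpoints[OF xc[of n] xc[of 0] xc[of N] yc[of 0] yc[of N] thin_x[OF \<open>n \<le> N\<close>]])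
      (simp_all add: y_def, linarith+)
  moreover have "wdist (y i) (y (Suc i)) \<le> p" if "i < N" for i
    using straight_chainD(2)[OF straight_chain_left_translate[OF chain a] that] by (simp add: y_def)
  moreover have "0 \<le> \<tau> + 2 * \<delta>" "0 \<le> p"
    using \<tau> p delta_nonneg by linarith+
  ultimately obtain j where "j \<le> N" "wdist (x n) (y j) \<le> ((\<tau> + 2 * \<delta>) + 2 * \<delta>) + p + 2 * (\<tau> + 2 * \<delta>) + 2 * \<delta>"
    using exists_near_chain_point[OF yc xc _ thin_y] by blast
  then show ?thesis
    using that by (simp add: y_def)
qed

lemma commuting_element_near_orbit:
  assumes g: "g \<in> carrier G" and u: "u \<in> carrier G" and c: "c \<in> carrier G"
    and comm: "c \<otimes> g = g \<otimes> c"
    and long: "2 * gprod (g \<otimes> u) u (g \<otimes> (g \<otimes> u)) + 3 * \<delta> < wdist u (g \<otimes> u)"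
  obtains n j :: nat where "wdist (g [^] n \<otimes> u) (c \<otimes> (g [^] j \<otimes> u))
    \<le> 3 * gprod (g \<otimes> u) u (g \<otimes> (g \<otimes> u)) + wdist u (g \<otimes> u) + 10 * \<delta>"
proof -
  define p where "p = wdist u (g \<otimes> u)"
  define \<tau> where "\<tau> = gprod (g \<otimes> u) u (g \<otimes> (g \<otimes> u))"
  define x where "x i = g [^] i \<otimes> u" for i :: nat
  have xc: "x i \<in> carrier G" for i
    using g u by (simp add: x_def)
  have chain: "straight_chain x N p \<tau>" for N
    unfolding x_def p_def \<tau>_def using g u by (rule orbit_straight_chain)
  have \<tau>: "0 \<le> \<tau>"
    using g u by (simp add: \<tau>_def gprod_nonneg)
  have p: "2 * \<tau> + 3 * \<delta> < p" "2 * \<tau> + 2 * \<delta> < p"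
    using long delta_nonneg by (simp_all add: p_def \<tau>_def)
  \<comment> \<open>As c commutes with g, it moves every point of the orbit by the same distance E.\<close>
  define E where "E = wdist u (c \<otimes> u)"
  obtain n :: nat where n: "E + \<tau> + 4 * \<delta> < n * (p - 2 * \<tau> - 2 * \<delta>)"
    using ex_less_of_nat_mult[of "p - 2 * \<tau> - 2 * \<delta>"] p by auto
  define N where "N = n + n"
  have x_shift: "x (n + i) = g [^] n \<otimes> x i" for i
    using g u by (simp add: x_def nat_pow_mult m_assoc[symmetric])
  have "n * (p - 2 * \<tau> - 2 * \<delta>) \<le> wdist (x 0) (x n)"
    using straight_chain_wdist_ge[OF chain[of N] \<tau> p(2), of n] by (simp add: N_def)
  moreover have "wdist (x n) (x N) = wdist (x 0) (x n)"
    using x_shift[of n] x_shift[of 0] g xc by (simp add: N_def wdist_left_translate)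
  ultimately have far: "E + \<tau> + 4 * \<delta> < wdist (x n) (x 0)" "E + \<tau> + 4 * \<delta> < wdist (x n) (x N)"
    using n xc by (simp_all add: wdist_commute[of "x n"])
  have "c \<otimes> x N = g [^] N \<otimes> (c \<otimes> u)"
    using group_commutes_pow[OF comm[symmetric] g c] g u c by (simp add: x_def m_assoc[symmetric])
  then have moved: "wdist (x 0) (c \<otimes> x 0) = E" "wdist (x N) (c \<otimes> x N) = E"
    using g u c by (simp_all add: x_def E_def wdist_left_translate)
  obtain j where "wdist (x n) (c \<otimes> x j) \<le> 3 * \<tau> + p + 10 * \<delta>"
    using straight_chain_translate_near[OF chain \<tau> p(1) c _ _ _ far] moved by (auto simp: N_def)
  then show ?thesis
    unfolding x_def p_def \<tau>_def by (rule that)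
qed

section \<open>Centralizers and retracts\<close>

lemma centralizer_finite_modulo_powers:
  assumes h: "h \<in> carrier G" and ord: "ord h = 0"
  obtains F where "finite F"
    and "\<And>c. c \<in> carrier G \<Longrightarrow> c \<otimes> h = h \<otimes> c \<Longrightarrow> \<exists>(n::nat) (j::nat). inv (h [^] n) \<otimes> c \<otimes> h [^] j \<in> F"
proof -
  obtain m :: nat and u where u: "u \<in> carrier G"
    and long: "2 * gprod (h [^] m \<otimes> u) u (h [^] m \<otimes> (h [^] m \<otimes> u)) + 3 * \<delta> < wdist u (h [^] m \<otimes> u)"
    by (rule infinite_order_straight_orbit[OF h ord]) blast
  define g where "g = h [^] m"
  have g: "g \<in> carrier G"
    using h by (simp add: g_def)
  define R where "R = 3 * gprod (g \<otimes> u) u (g \<otimes> (g \<otimes> u)) + wdist u (g \<otimes> u) + 10 * \<delta>"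
  define F where "F = (\<lambda>y. u \<otimes> y \<otimes> inv u) ` {y \<in> carrier G. real (len y) \<le> R}"
  have "\<exists>(n::nat) (j::nat). inv (h [^] n) \<otimes> c \<otimes> h [^] j \<in> F" if c: "c \<in> carrier G" "c \<otimes> h = h \<otimes> c" for c
  proof -
    have "c \<otimes> g = g \<otimes> c"
      using group_commutes_pow[of h c m] c h by (simp add: g_def)
    then obtain n j :: nat where near: "wdist (g [^] n \<otimes> u) (c \<otimes> (g [^] j \<otimes> u)) \<le> R"
      using commuting_element_near_orbit[OF g u c(1)] long unfolding R_def g_def by blast
    define y where "y = inv u \<otimes> (inv (g [^] n) \<otimes> c \<otimes> g [^] j) \<otimes> u"
    have "y \<in> carrier G" "real (len y) \<le> R"
      using near g u c by (simp_all add: y_def wdist_eq inv_mult_group m_assoc)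
    moreover have "inv (g [^] n) \<otimes> c \<otimes> g [^] j = u \<otimes> y \<otimes> inv u"
      using g u c by (simp add: y_def m_assoc)
    ultimately have "inv (h [^] (m * n)) \<otimes> c \<otimes> h [^] (m * j) \<in> F"
      using h by (auto simp: F_def g_def nat_pow_pow)
    then show ?thesis
      by blast
  qed
  moreover have "finite F"
    unfolding F_def by (intro finite_imageI finite_word_ball)
  ultimately show ?thesis
    using that by blast
qed

lemma retraction_kernel_commuting_torsion:
  assumes r: "r \<in> hom G G" and h: "h \<in> carrier G" "ord h = 0" "r h = h"
    and k: "k \<in> carrier G" "k \<otimes> h = h \<otimes> k" "r k = \<one>"
  shows "ord k \<noteq> 0"
proof
  assume ord_k: "ord k = 0"
  interpret group_hom G G r
    using r by (simp add: group_hom_def group_hom_axioms_def is_group)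
  obtain F where "finite F"
    and F: "\<And>c. c \<in> carrier G \<Longrightarrow> c \<otimes> h = h \<otimes> c \<Longrightarrow> \<exists>(n::nat) (j::nat). inv (h [^] n) \<otimes> c \<otimes> h [^] j \<in> F"
    by (rule centralizer_finite_modulo_powers[OF h(1,2)]) blast
  have commutes: "k [^] b \<otimes> h [^] j = h [^] j \<otimes> k [^] b" for b j :: nat
    using group_commutes_pow[of h "k [^] b" j] group_commutes_pow[of k h b] h k by simp
  have "\<forall>b::nat. \<exists>(n::nat) (j::nat). inv (h [^] n) \<otimes> k [^] b \<otimes> h [^] j \<in> F"
    using commutes[of _ 1] h k by (intro allI F) simp_all
  then obtain n j :: "nat \<Rightarrow> nat" where nj: "\<And>b. inv (h [^] n b) \<otimes> k [^] b \<otimes> h [^] j b \<in> F"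
    by metis
  define f where "f b = inv (h [^] n b) \<otimes> k [^] b \<otimes> h [^] j b" for b
  have f_eq: "f b = (inv (h [^] n b) \<otimes> h [^] j b) \<otimes> k [^] b" for b
    using commutes h k by (simp add: f_def m_assoc)
  have r_f: "r (f b) = inv (h [^] n b) \<otimes> h [^] j b" for b
    using h k by (simp add: f_def hom_nat_pow)
  have "f ` {..card F} \<subseteq> F"
    using nj by (auto simp: f_def)
  then obtain a b where "a \<noteq> b" "f a = f b"
    using \<open>finite F\<close> by (rule pigeonhole_atMost) auto
  then have "k [^] a = k [^] b"
    using f_eq[of a] f_eq[of b] r_f[of a] r_f[of b] h k by simp
  then show False
    using nat_pow_eq_imp_eq_of_ord_0[OF k(1) ord_k] \<open>a \<noteq> b\<close> by blast
qed

lemma retract_malnormal: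
  assumes tf: "torsion_free G" and "retract H G"
  shows "malnormal H G"
proof -
  obtain \<phi> where H: "subgroup H G" and \<phi>: "\<phi> \<in> hom G G"
    and into: "\<And>x. x \<in> carrier G \<Longrightarrow> \<phi> x \<in> H" and fixed: "\<And>h. h \<in> H \<Longrightarrow> \<phi> h = h"
    using retractE[OF \<open>retract H G\<close>] by blast
  show ?thesis
  proof (rule malnormalI[OF H])
    fix g h assume g: "g \<in> carrier G" "g \<notin> H" and h: "h \<in> H" and conj: "g \<otimes> h \<otimes> inv g \<in> H"
    show "h = \<one>"
    proof (rule ccontr)
      assume "h \<noteq> \<one>"
      define k where "k = inv (\<phi> g) \<otimes> g"
      have hc: "h \<in> carrier G" and k: "k \<in> carrier G"
        using h g into subgroup.subset[OF H] by (auto simp: k_def)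
      have "k \<noteq> \<one>"
        using g into[OF g(1)] subgroup.subset[OF H] by (auto simp: k_def inv_solve_left')
      have "ord k \<noteq> 0"
        using retraction_kernel_commuting_torsion[OF \<phi> hc torsion_free_ord_eq_0[OF tf hc \<open>h \<noteq> \<one>\<close>]]
          retraction_conj_commutes[OF \<phi> into fixed g(1) h hc conj] fixed[OF h] k
        by (simp add: k_def)
      then show False
        using torsion_free_ord_eq_0[OF tf k \<open>k \<noteq> \<one>\<close>] by simp
    qed
  qed
qed

end

lemma hyperbolic_groupE:
  assumes "hyperbolic_group G"
  obtains S \<delta> where "hyperbolic_word_metric G S \<delta>"
proof -
  obtain S \<delta> where "group G" "finite S" "S \<subseteq> carrier G" "generate G S = carrier G"
    and four_point: "\<forall>w\<in>carrier G. \<forall>x\<in>carrier G. \<forall>y\<in>carrier G. \<forall>z\<in>carrier G.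
      min (gromov_product G S w x y) (gromov_product G S w y z) - \<delta> \<le> gromov_product G S w x z"
    using assms unfolding hyperbolic_group_def by auto
  have "word_metric G S"
    using \<open>group G\<close> \<open>finite S\<close> \<open>S \<subseteq> carrier G\<close> \<open>generate G S = carrier G\<close>
    by (simp add: word_metric_def word_metric_axioms_def)
  moreover have "hyperbolic_word_metric_axioms G S (max \<delta> 0)"
    unfolding hyperbolic_word_metric_axioms_def
  proof (intro conjI allI impI)
    fix w x y z assume "w \<in> carrier G" "x \<in> carrier G" "y \<in> carrier G" "z \<in> carrier G"
    then have "min (gromov_product G S w x y) (gromov_product G S w y z) - \<delta> \<le> gromov_product G S w x z"
      using four_point by blast
    then show "min (gromov_product G S w x y) (gromov_product G S w y z) - max \<delta> 0 \<le> gromov_product G S w x z"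
      by linarith
  qed simp
  ultimately have "hyperbolic_word_metric G S (max \<delta> 0)"
    by (rule hyperbolic_word_metric.intro)
  then show ?thesis
    using that by blast
qed

theorem lemma5p3:
  fixes G :: "('a, 'b) monoid_scheme" and H :: "'a set"
  assumes "hyperbolic_group G" and "torsion_free G" and "retract H G"
  shows "malnormal H G"
proof -
  obtain S \<delta> where "hyperbolic_word_metric G S \<delta>"
    using hyperbolic_groupE[OF assms(1)] by blast
  then show ?thesis
    using hyperbolic_word_metric.retract_malnormal assms(2,3) by blast
qed

end
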